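(* Consider a Why Query with the \texttt{SUM} aggregate, an attribute $X$ with filters $p_1,\dots,p_m$, a threshold $\varepsilon$, a conciseness parameter $\sigma>0$, and a canonical predicate $P^C$. Then there exists an optimal explanation $P^*$ (a maximizer of $\rho_P-\sigma|P|$ over all $P\subseteq\{p_1,\dots,p_m\}$) with $P^*\subseteq P^C$.
   Context: $D$ is a finite table of rows; $M$ is a numerical column; $s_1,s_2$ are disjoint sets of rows (sibling subspaces). $X$ is a categorical column with values $x_1,\dots,x_m$; filter $p_i$ is the condition $X=x_i$. A predicate is $P\subseteq\{p_1,\dots,p_m\}$, $D_P$ the set of rows whose $X$-value is in $P$, $|P|$ its number of filters; $D'-D''$ is set difference. For $D'\subseteq D$, $\Delta(D')=\sum_{t\in D'\cap s_1}t[M]-\sum_{t\in D'\cap s_2}t[M]$; $\Delta_i=\Delta(D_{p_i})$; it is assumed $\Delta(D)>0$. $P$ is an actual cause if there is $\Gamma\subseteq\{p_1,\dots,p_m\}$, $\Gamma\cap P=\emptyset$ (valid contingency), with $\Delta(D-D_\Gamma-D_P)\le\varepsilon<\Delta(D-D_\Gamma)$. For an actual cause, $\rho_P=\frac{1}{1+\min_\Gamma|\Gamma|_W}$ over valid contingencies, with $|\Gamma|_W=\max\left(\frac{\Delta(D-D_P)-\Delta(D-D_P-D_\Gamma)}{\Delta(D)},0\right)$; otherwise $\rho_P=0$. Canonical predicate: order the filters so that $\Delta_1\ge\cdots\ge\Delta_m$ and let $j$ be such that $\Delta(D)-\sum_{i=1}^{j}\Delta_i\le\varepsilon<\Delta(D)-\sum_{i=1}^{j-1}\Delta_i$;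 then $P^C=\{p_1,\dots,p_j\}$. *)

theory Defs
  imports Complex_Main
begin

text \<open>A filter p_i (condition X = x_i) is identified with its value x_i, so the set of all
  filters is a finite set V of values and a predicate is a subset P of V.\<close>

definition Delta :: "('r \<Rightarrow> real) \<Rightarrow> 'r set \<Rightarrow> 'r set \<Rightarrow> 'r set \<Rightarrow> real" where
  "Delta M s1 s2 D' = (\<Sum>t\<in>D' \<inter> s1. M t) - (\<Sum>t\<in>D' \<inter> s2. M t)"

definition DP :: "('r \<Rightarrow> 'x) \<Rightarrow> 'r set \<Rightarrow> 'x set \<Rightarrow> 'r set" where
  "DP X D P = {t \<in> D. X t \<in> P}"

definition valid_contingency ::
  "'r set \<Rightarrow> ('r \<Rightarrow> real) \<Rightarrow> 'r set \<Rightarrow> 'r set \<Rightarrow> ('r \<Rightarrow> 'x) \<Rightarrow> 'x set \<Rightarrow> real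
    \<Rightarrow> 'x set \<Rightarrow> 'x set \<Rightarrow> bool" where
  "valid_contingency D M s1 s2 X V \<epsilon> P \<Gamma> \<longleftrightarrow>
     \<Gamma> \<subseteq> V \<and> \<Gamma> \<inter> P = {} \<and>
     Delta M s1 s2 (D - DP X D \<Gamma> - DP X D P) \<le> \<epsilon> \<and>
     \<epsilon> < Delta M s1 s2 (D - DP X D \<Gamma>)"

definition actual_cause ::
  "'r set \<Rightarrow> ('r \<Rightarrow> real) \<Rightarrow> 'r set \<Rightarrow> 'r set \<Rightarrow> ('r \<Rightarrow> 'x) \<Rightarrow> 'x set \<Rightarrow> real
    \<Rightarrow> 'x set \<Rightarrow> bool" where
  "actual_cause D M s1 s2 X V \<epsilon> P \<longleftrightarrow> (\<exists>\<Gamma>. valid_contingency D M s1 s2 X V \<epsilon> P \<Gamma>)"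

definition cont_weight ::
  "'r set \<Rightarrow> ('r \<Rightarrow> real) \<Rightarrow> 'r set \<Rightarrow> 'r set \<Rightarrow> ('r \<Rightarrow> 'x) \<Rightarrow> 'x set \<Rightarrow> 'x set \<Rightarrow> real" where
  "cont_weight D M s1 s2 X P \<Gamma> =
     max ((Delta M s1 s2 (D - DP X D P) - Delta M s1 s2 (D - DP X D P - DP X D \<Gamma>))
            / Delta M s1 s2 D) 0"

definition responsibility ::
  "'r set \<Rightarrow> ('r \<Rightarrow> real) \<Rightarrow> 'r set \<Rightarrow> 'r set \<Rightarrow> ('r \<Rightarrow> 'x) \<Rightarrow> 'x set \<Rightarrow> real
    \<Rightarrow> 'x set \<Rightarrow> real" where
  "responsibility D M s1 s2 X V \<epsilon> P =
     (if actual_cause D M s1 s2 X V \<epsilon> P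
      then 1 / (1 + Min {cont_weight D M s1 s2 X P \<Gamma> | \<Gamma>. valid_contingency D M s1 s2 X V \<epsilon> P \<Gamma>})
      else 0)"

text \<open>Canonical predicate: ord lists the filters in an order with non-increasing
  Delta_i, and j is the cut-off index (1 \<le> j \<le> m); P^C = set (take j ord).\<close>

definition canonical_predicate ::
  "'r set \<Rightarrow> ('r \<Rightarrow> real) \<Rightarrow> 'r set \<Rightarrow> 'r set \<Rightarrow> ('r \<Rightarrow> 'x) \<Rightarrow> 'x set \<Rightarrow> real
    \<Rightarrow> 'x list \<Rightarrow> nat \<Rightarrow> bool" where
  "canonical_predicate D M s1 s2 X V \<epsilon> ord j \<longleftrightarrow>
     distinct ord \<and> set ord = V \<and>
     sorted_wrt (\<lambda>a b. Delta M s1 s2 (DP X D {a}) \<ge> Delta M s1 s2 (DP X D {b})) ord \<and>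
     1 \<le> j \<and> j \<le> length ord \<and>
     Delta M s1 s2 D - (\<Sum>i<j. Delta M s1 s2 (DP X D {ord ! i})) \<le> \<epsilon> \<and>
     \<epsilon> < Delta M s1 s2 D - (\<Sum>i<j - 1. Delta M s1 s2 (DP X D {ord ! i}))"

end

theory Submission imports Defs begin

text \<open>For the SUM aggregate \<open>\<Delta>\<close> is additive over the filters, so with \<open>d\<^sub>a = \<Delta>(D\<^sub>a)\<close> and
  \<open>d(S) = \<Sum>a\<in>S. d\<^sub>a\<close> a contingency \<open>\<Gamma>\<close> is valid for \<open>P\<close> iff
  \<open>\<Delta>(D) - d(\<Gamma>) - d(P) \<le> \<epsilon> < \<Delta>(D) - d(\<Gamma>)\<close>, and its weight is \<open>d(\<Gamma>) / \<Delta>(D)\<close>.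
  Let \<open>Q\<close> consist of the \<open>|P|\<close> filters with the largest \<open>d\<^sub>a\<close>. Trading the filters of \<open>\<Gamma>\<close> that
  lie in \<open>Q\<close> for equally many filters of \<open>P - Q\<close> turns every valid contingency of \<open>P\<close> into
  a valid contingency of \<open>Q\<close> that is no heavier, so \<open>\<rho>\<^sub>Q \<ge> \<rho>\<^sub>P\<close> at equal size. If \<open>|P| \<le> j\<close>
  then \<open>Q \<subseteq> P\<^sup>C\<close>; otherwise \<open>P\<^sup>C\<close> itself, which is a counterfactual cause with the empty
  contingency and hence has \<open>\<rho> = 1\<close>, beats \<open>P\<close>. So a best subset of \<open>P\<^sup>C\<close> is optimal.\<close>

lemma sum_le_sum_if_dominated:
  fixes d :: "'a \<Rightarrow> 'b::ordered_comm_monoid_add"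
  assumes "finite A" "finite B" "card B = card A"
    and "\<And>x y. x \<in> A \<Longrightarrow> y \<in> B \<Longrightarrow> d y \<le> d x"
  shows "sum d B \<le> sum d A"
proof -
  obtain h where h: "bij_betw h A B"
    using finite_same_card_bij assms(1-3) by metis
  have "sum d B = (\<Sum>x\<in>A. d (h x))"
    by (rule sum.reindex_bij_betw[OF h, symmetric])
  also have "\<dots> \<le> sum d A"
    using assms(4) bij_betwE[OF h] by (intro sum_mono) blast
  finally show ?thesis .
qed

lemma ex_max_if_dominated_by_finite:
  fixes F :: "'a \<Rightarrow> 'b::linorder"
  assumes "finite C" "C \<noteq> {}" and dominated: "\<And>x. x \<in> S \<Longrightarrow> \<exists>y\<in>C. F x \<le> F y"
  obtains z where "z \<in> C" "\<And>x. x \<in> S \<Longrightarrow> F x \<le> F z"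
proof -
  have "Max (F ` C) \<in> F ` C"
    using assms(1,2) by (intro Max_in) auto
  then obtain z where z: "Max (F ` C) = F z" "z \<in> C"
    by (rule imageE)
  show thesis
  proof (rule that[OF z(2)])
    fix x assume "x \<in> S"
    then obtain y where y: "y \<in> C" "F x \<le> F y"
      using dominated by blast
    have "F y \<le> F z"
      unfolding z(1)[symmetric] using assms(1) y(1) by (intro Max_ge) auto
    with y(2) show "F x \<le> F z"
      by (rule order_trans)
  qed
qed

lemma exchange_with_top_set:
  fixes d :: "'a \<Rightarrow> real"
  assumes "finite V" "Q \<subseteq> V" and top: "\<And>x y. x \<in> Q \<Longrightarrow> y \<in> V - Q \<Longrightarrow> d y \<le> d x"
    and "P \<subseteq> V" "card P = card Q" "\<Gamma> \<subseteq> V" "\<Gamma> \<inter> P = {}"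
  obtains \<Gamma>' where "\<Gamma>' \<subseteq> V" "\<Gamma>' \<inter> Q = {}" "sum d \<Gamma>' \<le> sum d \<Gamma>"
    "sum d \<Gamma> + sum d P \<le> sum d \<Gamma>' + sum d Q"
proof -
  have fin: "finite Q" "finite P" "finite \<Gamma>"
    using assms finite_subset by blast+
  define A where "A = \<Gamma> \<inter> Q"
  have A: "A \<subseteq> Q - P" "finite A"
    using assms(7) fin unfolding A_def by auto
  have card_Diff: "card (Q - P) = card (P - Q)"
    using fin assms(5) by (simp add: card_Diff_subset_Int Int_commute)
  then have "card A \<le> card (P - Q)"
    using A fin by (metis card_mono finite_Diff)
  then obtain B where B: "B \<subseteq> P - Q" "card B = card A" "finite B"
    by (metis obtain_subset_with_card_n)
  \<comment> \<open>\<open>A\<close> is swapped for \<open>B\<close>; the leftovers \<open>Q - P - A\<close> and \<open>P - Q - B\<close> are compared likewise.\<close>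
  have "card (P - Q - B) = card (Q - P - A)"
    using A B card_Diff fin by (simp add: card_Diff_subset)
  moreover have "B \<subseteq> V - Q" "P - Q - B \<subseteq> V - Q"
    using B assms(4) by auto
  ultimately have leftover: "sum d (P - Q - B) \<le> sum d (Q - P - A)"
    and swap: "sum d B \<le> sum d A"
    using A B fin by (auto intro!: sum_le_sum_if_dominated top)
  show thesis
  proof
    show "(\<Gamma> - Q) \<union> B \<subseteq> V" "((\<Gamma> - Q) \<union> B) \<inter> Q = {}"
      using assms(4,6) B by auto
    have \<Gamma>: "sum d \<Gamma> = sum d (\<Gamma> - Q) + sum d A"
      using sum.Int_Diff[OF fin(3), of d Q] unfolding A_def by simp
    have \<Gamma>': "sum d ((\<Gamma> - Q) \<union> B) = sum d (\<Gamma> - Q) + sum d B"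
      using B fin assms(7) by (intro sum.union_disjoint) auto
    have P: "sum d P = sum d (P \<inter> Q) + sum d B + sum d (P - Q - B)"
      using sum.Int_Diff[OF fin(2), of d Q] sum.Int_Diff[of "P - Q" d B] fin B
      by (simp add: Int_absorb1)
    have Q: "sum d Q = sum d (P \<inter> Q) + sum d A + sum d (Q - P - A)"
      using sum.Int_Diff[OF fin(1), of d P] sum.Int_Diff[of "Q - P" d A] fin A
      by (simp add: Int_absorb2 Int_commute)
    show "sum d ((\<Gamma> - Q) \<union> B) \<le> sum d \<Gamma>"
      using \<Gamma> \<Gamma>' swap by linarith
    show "sum d \<Gamma> + sum d P \<le> sum d ((\<Gamma> - Q) \<union> B) + sum d Q"
      using \<Gamma> \<Gamma>' P Q leftover by linarith
  qed
qed

lemma sorted_wrt_take_dominates_rest: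
  assumes "sorted_wrt (\<lambda>a b. d b \<le> d a) xs"
    and "x \<in> set (take k xs)" and "y \<in> set xs - set (take k xs)"
  shows "d y \<le> d x"
proof -
  have "y \<in> set (drop k xs)"
    using assms(3) set_append[of "take k xs" "drop k xs", unfolded append_take_drop_id] by blast
  moreover have "sorted_wrt (\<lambda>a b. d b \<le> d a) (take k xs @ drop k xs)"
    using assms(1) by (simp only: append_take_drop_id)
  ultimately show ?thesis
    using assms(2) unfolding sorted_wrt_append by blast
qed

lemma sum_set_take_distinct:
  assumes "distinct xs" "n \<le> length xs"
  shows "sum f (set (take n xs)) = (\<Sum>i<n. f (xs ! i))"
proof -
  have "set (take n xs) = (!) xs ` {..<n}"
    using nth_image[OF assms(2)] by (simp add: atLeast0LessThan)
  moreover have "inj_on ((!) xs) {..<n}"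
    using assms by (simp add: inj_on_nth)
  ultimately show ?thesis by (simp add: sum.reindex)
qed

lemma sum_take_nonneg_if_sorted:
  fixes f :: "'a \<Rightarrow> 'b::linordered_idom"
  assumes "sorted_wrt (\<lambda>a b. f b \<le> f a) xs" "k < length xs" "f (xs ! k) > 0"
  shows "(\<Sum>i<k. f (xs ! i)) \<ge> 0"
proof (intro sum_nonneg)
  fix i assume "i \<in> {..<k}"
  then have "f (xs ! k) \<le> f (xs ! i)"
    using sorted_wrt_nth_less[OF assms(1)] assms(2) by simp
  with assms(3) show "0 \<le> f (xs ! i)" by simp
qed

lemma Delta_Un_disjoint:
  assumes "finite A" "finite B" "A \<inter> B = {}"
  shows "Delta M s1 s2 (A \<union> B) = Delta M s1 s2 A + Delta M s1 s2 B"
proof -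
  have "sum M ((A \<union> B) \<inter> s) = sum M (A \<inter> s) + sum M (B \<inter> s)" for s
    using assms by (simp add: Int_Un_distrib2 sum.union_disjoint disjoint_iff)
  then show ?thesis
    by (simp add: Delta_def)
qed

lemma Delta_Diff:
  assumes "finite D" "A \<subseteq> D"
  shows "Delta M s1 s2 (D - A) = Delta M s1 s2 D - Delta M s1 s2 A"
proof -
  have "D = (D - A) \<union> A"
    using assms(2) by blast
  then have "Delta M s1 s2 D = Delta M s1 s2 (D - A) + Delta M s1 s2 A"
    using assms finite_subset by (metis Delta_Un_disjoint Diff_disjoint Int_commute finite_Diff)
  then show ?thesis
    by simp
qed

lemma Delta_DP_eq_sum:
  assumes "finite D" "finite G"
  shows "Delta M s1 s2 (DP X D G) = (\<Sum>a\<in>G. Delta M s1 s2 (DP X D {a}))"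
  using assms(2)
proof (induction G rule: finite_induct)
  case empty
  then show ?case
    by (simp add: DP_def Delta_def)
next
  case (insert a G)
  have "DP X D (insert a G) = DP X D {a} \<union> DP X D G"
    by (auto simp: DP_def)
  moreover have "DP X D {a} \<inter> DP X D G = {}"
    using insert.hyps by (auto simp: DP_def)
  moreover have "finite (DP X D S)" for S
    using assms(1) by (simp add: DP_def)
  ultimately have "Delta M s1 s2 (DP X D (insert a G)) =
      Delta M s1 s2 (DP X D {a}) + Delta M s1 s2 (DP X D G)"
    by (simp add: Delta_Un_disjoint)
  with insert show ?case
    by simp
qed

lemma Delta_Diff_DP:
  assumes "finite D" "finite G"
  shows "Delta M s1 s2 (D - DP X D G) = Delta M s1 s2 D - (\<Sum>a\<in>G. Delta M s1 s2 (DP X D {a}))"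
proof -
  have "DP X D G \<subseteq> D"
    by (auto simp: DP_def)
  then show ?thesis
    using assms by (simp only: Delta_Diff Delta_DP_eq_sum)
qed

lemma Diff_DP_Diff_DP: "D - DP X D A - DP X D B = D - DP X D (A \<union> B)"
  by (auto simp: DP_def)

lemma cont_weight_nonneg: "cont_weight D M s1 s2 X P \<Gamma> \<ge> 0"
  by (simp add: cont_weight_def)

context
  fixes D :: "'r set" and M :: "'r \<Rightarrow> real" and s1 s2 :: "'r set" and X :: "'r \<Rightarrow> 'x"
    and V :: "'x set" and \<epsilon> :: real
  assumes finite_V: "finite V"
begin

private abbreviation (input) valid :: "'x set \<Rightarrow> 'x set \<Rightarrow> bool" where
  "valid P \<Gamma> \<equiv> valid_contingency D M s1 s2 X V \<epsilon> P \<Gamma>"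

private abbreviation (input) weight :: "'x set \<Rightarrow> 'x set \<Rightarrow> real" where
  "weight P \<Gamma> \<equiv> cont_weight D M s1 s2 X P \<Gamma>"

private abbreviation (input) \<rho> :: "'x set \<Rightarrow> real" where
  "\<rho> P \<equiv> responsibility D M s1 s2 X V \<epsilon> P"

lemma responsibility_attained:
  assumes "actual_cause D M s1 s2 X V \<epsilon> P"
  obtains \<Gamma> where "valid P \<Gamma>" "\<rho> P = 1 / (1 + weight P \<Gamma>)"
    "\<And>\<Gamma>'. valid P \<Gamma>' \<Longrightarrow> weight P \<Gamma> \<le> weight P \<Gamma>'"
proof -
  let ?W = "{weight P \<Gamma> | \<Gamma>. valid P \<Gamma>}"
  have "?W \<subseteq> weight P ` Pow V"
    by (auto simp: valid_contingency_def)
  then have fin: "finite ?W"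
    using finite_V finite_subset by blast
  have "?W \<noteq> {}"
    using assms unfolding actual_cause_def by blast
  then have "Min ?W \<in> ?W"
    by (rule Min_in[OF fin])
  then obtain \<Gamma> where \<Gamma>: "valid P \<Gamma>" "Min ?W = weight P \<Gamma>"
    by blast
  show thesis
  proof (rule that[OF \<Gamma>(1)])
    show "\<rho> P = 1 / (1 + weight P \<Gamma>)"
      using assms \<Gamma>(2) by (simp add: responsibility_def)
    fix \<Gamma>' assume "valid P \<Gamma>'"
    then have "weight P \<Gamma>' \<in> ?W"
      by blast
    then have "Min ?W \<le> weight P \<Gamma>'"
      by (rule Min_le[OF fin])
    then show "weight P \<Gamma> \<le> weight P \<Gamma>'"
      by (simp only: \<Gamma>(2))
  qed
qed

lemma responsibility_nonneg: "\<rho> P \<ge> 0"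
proof (cases "actual_cause D M s1 s2 X V \<epsilon> P")
  case True
  then obtain \<Gamma> where "\<rho> P = 1 / (1 + weight P \<Gamma>)"
    by (rule responsibility_attained)
  then show ?thesis
    using cont_weight_nonneg[of D M s1 s2 X P \<Gamma>] by simp
qed (simp add: responsibility_def)

lemma responsibility_ge:
  assumes "valid P \<Gamma>"
  shows "1 / (1 + weight P \<Gamma>) \<le> \<rho> P"
proof -
  have "actual_cause D M s1 s2 X V \<epsilon> P"
    using assms unfolding actual_cause_def by blast
  then obtain \<Gamma>\<^sub>0 where \<Gamma>\<^sub>0: "valid P \<Gamma>\<^sub>0" "\<rho> P = 1 / (1 + weight P \<Gamma>\<^sub>0)"
    "\<And>\<Gamma>'. valid P \<Gamma>' \<Longrightarrow> weight P \<Gamma>\<^sub>0 \<le> weight P \<Gamma>'"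
    by (rule responsibility_attained) (rule that)
  show ?thesis
    unfolding \<Gamma>\<^sub>0(2) using \<Gamma>\<^sub>0(3)[OF assms] cont_weight_nonneg[of D M s1 s2 X P \<Gamma>\<^sub>0]
    by (intro frac_le) auto
qed

lemma responsibility_mono:
  assumes "\<And>\<Gamma>. valid P \<Gamma> \<Longrightarrow> \<exists>\<Gamma>'. valid P' \<Gamma>' \<and> weight P' \<Gamma>' \<le> weight P \<Gamma>"
  shows "\<rho> P \<le> \<rho> P'"
proof (cases "actual_cause D M s1 s2 X V \<epsilon> P")
  case True
  then obtain \<Gamma> where \<Gamma>: "valid P \<Gamma>" "\<rho> P = 1 / (1 + weight P \<Gamma>)"
    by (rule responsibility_attained)
  then obtain \<Gamma>' where \<Gamma>': "valid P' \<Gamma>'" "weight P' \<Gamma>' \<le> weight P \<Gamma>"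
    using assms by blast
  have "\<rho> P \<le> 1 / (1 + weight P' \<Gamma>')"
    unfolding \<Gamma>(2) using \<Gamma>'(2) cont_weight_nonneg[of D M s1 s2 X P' \<Gamma>']
    by (intro frac_le) auto
  also have "\<dots> \<le> \<rho> P'"
    using \<Gamma>'(1) by (rule responsibility_ge)
  finally show ?thesis .
next
  case False
  then have "\<rho> P = 0"
    by (simp add: responsibility_def)
  with responsibility_nonneg[of P'] show ?thesis
    by simp
qed

context
  assumes finite_D: "finite D"
begin

private abbreviation (input) \<delta> :: "'x \<Rightarrow> real" where
  "\<delta> a \<equiv> Delta M s1 s2 (DP X D {a})"

lemma Delta_Diff_DP_Un:
  assumes "\<Gamma> \<subseteq> V" "P \<subseteq> V" "\<Gamma> \<inter> P = {}"
  shows "Delta M s1 s2 (D - DP X D \<Gamma> - DP X D P) = Delta M s1 s2 D - sum \<delta> \<Gamma> - sum \<delta> P"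
proof -
  have "finite \<Gamma>" "finite P"
    using assms finite_V finite_subset by blast+
  then show ?thesis
    unfolding Diff_DP_Diff_DP using assms(3)
    by (simp add: Delta_Diff_DP[OF finite_D] sum.union_disjoint)
qed

lemma valid_contingency_iff:
  assumes "P \<subseteq> V"
  shows "valid P \<Gamma> \<longleftrightarrow> \<Gamma> \<subseteq> V \<and> \<Gamma> \<inter> P = {} \<and>
    Delta M s1 s2 D - sum \<delta> \<Gamma> - sum \<delta> P \<le> \<epsilon> \<and> \<epsilon> < Delta M s1 s2 D - sum \<delta> \<Gamma>"
proof (cases "\<Gamma> \<subseteq> V \<and> \<Gamma> \<inter> P = {}")
  case True
  moreover have "Delta M s1 s2 (D - DP X D \<Gamma>) = Delta M s1 s2 D - sum \<delta> \<Gamma>"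
    using True finite_V finite_subset by (metis Delta_Diff_DP finite_D)
  ultimately show ?thesis
    using assms by (simp add: valid_contingency_def Delta_Diff_DP_Un)
qed (auto simp: valid_contingency_def)

lemma cont_weight_eq:
  assumes "P \<subseteq> V" "\<Gamma> \<subseteq> V" "\<Gamma> \<inter> P = {}"
  shows "weight P \<Gamma> = max (sum \<delta> \<Gamma> / Delta M s1 s2 D) 0"
proof -
  have "D - DP X D P - DP X D \<Gamma> = D - DP X D \<Gamma> - DP X D P"
    by blast
  moreover have "Delta M s1 s2 (D - DP X D P) = Delta M s1 s2 D - sum \<delta> P"
    using assms(1) finite_V finite_subset by (metis Delta_Diff_DP finite_D)
  ultimately show ?thesis
    using assms by (simp add: cont_weight_def Delta_Diff_DP_Un)
qed

lemma responsibility_le_prefix: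
  assumes "Delta M s1 s2 D > 0" "distinct ord" "set ord = V"
    and "sorted_wrt (\<lambda>a b. \<delta> b \<le> \<delta> a) ord" "P \<subseteq> V"
  shows "\<rho> P \<le> \<rho> (set (take (card P) ord))"
proof (rule responsibility_mono)
  let ?Q = "set (take (card P) ord)"
  have QV: "?Q \<subseteq> V"
    using set_take_subset[of "card P" ord] assms(3) by simp
  have "card P \<le> length ord"
    using card_mono[OF finite_V assms(5)] distinct_card[OF assms(2)] assms(3) by simp
  then have card_Q: "card P = card ?Q"
    using assms(2) by (simp add: distinct_card)
  have top: "\<delta> y \<le> \<delta> x" if "x \<in> ?Q" "y \<in> V - ?Q" for x y
    using sorted_wrt_take_dominates_rest[OF assms(4) that(1)] that(2) assms(3) by simp
  fix \<Gamma> assume "valid P \<Gamma>"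
  then have \<Gamma>: "\<Gamma> \<subseteq> V" "\<Gamma> \<inter> P = {}"
    "Delta M s1 s2 D - sum \<delta> \<Gamma> - sum \<delta> P \<le> \<epsilon>" "\<epsilon> < Delta M s1 s2 D - sum \<delta> \<Gamma>"
    using valid_contingency_iff[OF assms(5)] by simp_all
  obtain \<Gamma>' where \<Gamma>': "\<Gamma>' \<subseteq> V" "\<Gamma>' \<inter> ?Q = {}" "sum \<delta> \<Gamma>' \<le> sum \<delta> \<Gamma>"
    "sum \<delta> \<Gamma> + sum \<delta> P \<le> sum \<delta> \<Gamma>' + sum \<delta> ?Q"
    by (rule exchange_with_top_set[OF finite_V QV top assms(5) card_Q \<Gamma>(1,2)])
  have "Delta M s1 s2 D - sum \<delta> \<Gamma>' - sum \<delta> ?Q \<le> \<epsilon>" "\<epsilon> < Delta M s1 s2 D - sum \<delta> \<Gamma>'"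
    using \<Gamma>(3,4) \<Gamma>'(3,4) by linarith+
  with \<Gamma>'(1,2) have "valid ?Q \<Gamma>'"
    by (simp add: valid_contingency_iff[OF QV])
  moreover have "weight ?Q \<Gamma>' \<le> weight P \<Gamma>"
    unfolding cont_weight_eq[OF QV \<Gamma>'(1,2)] cont_weight_eq[OF assms(5) \<Gamma>(1,2)]
    using \<Gamma>'(3) assms(1) by (intro max.mono divide_right_mono) simp_all
  ultimately show "\<exists>\<Gamma>'. valid ?Q \<Gamma>' \<and> weight ?Q \<Gamma>' \<le> weight P \<Gamma>"
    by blast
qed

lemma canonical_threshold_less:
  assumes "canonical_predicate D M s1 s2 X V \<epsilon> ord j"
  shows "\<epsilon> < Delta M s1 s2 D"
proof -
  note canon = assms[unfolded canonical_predicate_def]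
  obtain k where k: "j = Suc k"
    using canon by (cases j) auto
  then have "\<delta> (ord ! k) > 0"
    using canon by simp
  then have "(\<Sum>i<k. \<delta> (ord ! i)) \<ge> 0"
    using canon k by (intro sum_take_nonneg_if_sorted) auto
  then show ?thesis
    using canon k by simp
qed

lemma responsibility_le_canonical:
  assumes "canonical_predicate D M s1 s2 X V \<epsilon> ord j"
  shows "\<rho> P \<le> \<rho> (set (take j ord))"
proof (rule responsibility_mono)
  let ?C = "set (take j ord)"
  note canon = assms[unfolded canonical_predicate_def]
  have CV: "?C \<subseteq> V"
    using set_take_subset[of j ord] canon by simp
  have "valid ?C {}"
    using valid_contingency_iff[OF CV] canonical_threshold_less[OF assms] canon
      sum_set_take_distinct[of ord j \<delta>] by simp
  moreover have "weight ?C {} \<le> weight P \<Gamma>" for \<Gamma>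
    using cont_weight_eq[OF CV, of "{}"] cont_weight_nonneg[of D M s1 s2 X P \<Gamma>] by simp
  ultimately show "\<exists>\<Gamma>'. valid ?C \<Gamma>' \<and> weight ?C \<Gamma>' \<le> weight P \<Gamma>" for \<Gamma>
    by blast
qed

end

end

theorem proposition3p16:
  fixes D s1 s2 :: "'r set" and M :: "'r \<Rightarrow> real" and X :: "'r \<Rightarrow> 'x"
    and V :: "'x set" and \<epsilon> \<sigma> :: real and ord :: "'x list" and j :: nat
  assumes "finite D"
    and "s1 \<inter> s2 = {}"
    and "finite V"
    and "\<forall>t\<in>D. X t \<in> V"
    and "Delta M s1 s2 D > 0"
    and "\<sigma> > 0"
    and "canonical_predicate D M s1 s2 X V \<epsilon> ord j"
  shows "\<exists>Pstar. Pstar \<subseteq> set (take j ord) \<and>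
           (\<forall>P. P \<subseteq> V \<longrightarrow>
              responsibility D M s1 s2 X V \<epsilon> P - \<sigma> * real (card P)
                \<le> responsibility D M s1 s2 X V \<epsilon> Pstar - \<sigma> * real (card Pstar))"
proof -
  define C where "C = set (take j ord)"
  define F where "F P = responsibility D M s1 s2 X V \<epsilon> P - \<sigma> * real (card P)" for P
  note canon = assms(7)[unfolded canonical_predicate_def]
  have dominated: "\<exists>Q \<in> Pow C. F P \<le> F Q" if "P \<in> Pow V" for P
  proof (cases "card P \<le> j")
    case True
    let ?Q = "set (take (card P) ord)"
    have "?Q \<subseteq> C" "card ?Q = card P"
      using True canon unfolding C_def by (simp_all add: set_take_subset_set_take distinct_card)
    moreover have "responsibility D M s1 s2 X V \<epsilon> P \<le> responsibility D M s1 s2 X V \<epsilon> ?Q"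
      using responsibility_le_prefix[OF assms(3,1,5)] canon that by simp
    ultimately show ?thesis
      unfolding F_def by (intro bexI[of _ ?Q]) simp_all
  next
    case False
    then have "\<sigma> * real (card C) \<le> \<sigma> * real (card P)"
      using canon assms(6) unfolding C_def by (simp add: distinct_card)
    moreover have "responsibility D M s1 s2 X V \<epsilon> P \<le> responsibility D M s1 s2 X V \<epsilon> C"
      unfolding C_def by (rule responsibility_le_canonical[OF assms(3,1,7)])
    ultimately show ?thesis
      unfolding F_def by (intro bexI[of _ C]) simp_all
  qed
  have "finite (Pow C)" "Pow C \<noteq> {}"
    unfolding C_def by auto
  then obtain Pstar where "Pstar \<in> Pow C" "\<And>P. P \<in> Pow V \<Longrightarrow> F P \<le> F Pstar"
    using ex_max_if_dominated_by_finite[OF _ _ dominated] by blast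
  then show ?thesis
    unfolding C_def F_def by blast
qed

end
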